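(* Let $\mathscr{P}=\{X_t\}_{t\ge1}$ be a stationary ergodic stochastic process over a finite alphabet $\Sigma$, and let $Q$ be its set of causal states (excluding the class of zero-probability sequences). For $q,q'\in Q$ put $\pi_{q,q'}=\sum_{\sigma\in\Sigma:\,q\sigma=q'}\phi_q(\sigma)$. Then for every $q'\in Q$ and every $d\in\mathbb{N}^+$, $$p_d(q')=\sum_{q\in Q}\pi_{q,q'}\,p_{d-1}(q).$$ Furthermore, $\pi_{q,q'}=0$ whenever $q$ is persistent and $q'$ is transient.
   Context: For $x=\sigma_1\cdots\sigma_n\in\Sigma^\star$ (finite sequences, $\lambda$ the empty sequence) write $Pr(x)=Pr(X_1\cdots X_n=\sigma_1\cdots\sigma_n)$, with $Pr(\lambda)=1$. For $x$ with $Pr(x)>0$, $\mu_x$ is the probability measure on $\Sigma^\omega$ (with the $\sigma$-field generated by cylinders $y\Sigma^\omega$) determined by $\mu_x(y\Sigma^\omega)=Pr(xy)/Pr(x)$. Sequences $x,y$ are equivalent ($x\sim y$) iff $Pr(x)=Pr(y)=0$ or $\mu_x=\mu_y$; this equivalence is right-invariant ($x\sim y\Rightarrow xz\sim yz$). The equivalence classes $[x]$ with $Pr(x)>0$ are the causal states; $\mu_{[x]}:=\mu_x$. The symbolic derivative is $\phi_q(\sigma)=\mu_q(\sigma\Sigma^\omega)$. The notation $q\sigma=q'$ means $[x\sigma]=q'$ for all $x\in q$ (well-defined when $\phi_q(\sigma)>0$). For $q\in Q$ and $d\in\mathbb{N}$, $p_d(q)=\sum_{x\in\Sigma^d:\,[x]=q}Pr(x)$.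 A causal state $q$ is persistent if $\liminf_{d\to\infty}p_d(q)>0$ and transient otherwise. *)

theory Defs
  imports "HOL-Probability.Probability"
begin

text \<open>A process is given by a probability space M and random variables
  X t : M \<rightarrow> \<Sigma> (t = 0,1,2,...; X 0 plays the role of X_1).\<close>

definition law :: "'w measure \<Rightarrow> (nat \<Rightarrow> 'w \<Rightarrow> 'a) \<Rightarrow> (nat \<Rightarrow> 'a) measure" where
  "law M X = distr M (PiM UNIV (\<lambda>_. count_space UNIV)) (\<lambda>\<omega> t. X t \<omega>)"

definition shift :: "(nat \<Rightarrow> 'a) \<Rightarrow> (nat \<Rightarrow> 'a)" where
  "shift f = (\<lambda>t. f (Suc t))"

definition stationary_ergodic :: "'w measure \<Rightarrow> (nat \<Rightarrow> 'w \<Rightarrow> 'a) \<Rightarrow> bool" where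
  "stationary_ergodic M X \<longleftrightarrow>
     prob_space M \<and>
     (\<forall>t. X t \<in> measurable M (count_space UNIV)) \<and>
     distr (law M X) (PiM UNIV (\<lambda>_. count_space UNIV)) shift = law M X \<and>
     (\<forall>A \<in> sets (law M X). shift -` A \<inter> space (law M X) = A \<longrightarrow>
         emeasure (law M X) A = 0 \<or> emeasure (law M X) A = 1)"

definition Pr :: "'w measure \<Rightarrow> (nat \<Rightarrow> 'w \<Rightarrow> 'a) \<Rightarrow> 'a list \<Rightarrow> real" where
  "Pr M X x = measure M {\<omega> \<in> space M. \<forall>i < length x. X i \<omega> = x ! i}"

text \<open>mu_x(y Sigma^omega) = Pr(xy)/Pr(x); mu_x is determined by these cylinder values.\<close>
definition mu_cyl :: "'w measure \<Rightarrow> (nat \<Rightarrow> 'w \<Rightarrow> 'a) \<Rightarrow> 'a list \<Rightarrow> 'a list \<Rightarrow> real" where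
  "mu_cyl M X x y = Pr M X (x @ y) / Pr M X x"

definition cequiv :: "'w measure \<Rightarrow> (nat \<Rightarrow> 'w \<Rightarrow> 'a) \<Rightarrow> 'a list \<Rightarrow> 'a list \<Rightarrow> bool" where
  "cequiv M X x y \<longleftrightarrow> (Pr M X x = 0 \<and> Pr M X y = 0) \<or>
     (Pr M X x > 0 \<and> Pr M X y > 0 \<and> mu_cyl M X x = mu_cyl M X y)"

definition cls :: "'w measure \<Rightarrow> (nat \<Rightarrow> 'w \<Rightarrow> 'a) \<Rightarrow> 'a list \<Rightarrow> 'a list set" where
  "cls M X x = {y. cequiv M X x y}"

definition causal_states :: "'w measure \<Rightarrow> (nat \<Rightarrow> 'w \<Rightarrow> 'a) \<Rightarrow> 'a list set set" where
  "causal_states M X = {cls M X x | x. Pr M X x > 0}"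

definition sym_deriv :: "'w measure \<Rightarrow> (nat \<Rightarrow> 'w \<Rightarrow> 'a) \<Rightarrow> 'a list set \<Rightarrow> 'a \<Rightarrow> real" where
  "sym_deriv M X q \<sigma> = mu_cyl M X (SOME x. x \<in> q) [\<sigma>]"

text \<open>q sigma = q' : [x sigma] = q' for all x in q.\<close>
definition next_state :: "'w measure \<Rightarrow> (nat \<Rightarrow> 'w \<Rightarrow> 'a) \<Rightarrow> 'a list set \<Rightarrow> 'a \<Rightarrow> 'a list set \<Rightarrow> bool" where
  "next_state M X q \<sigma> q' \<longleftrightarrow> (\<forall>x \<in> q. cls M X (x @ [\<sigma>]) = q')"

definition trans_prob :: "'w measure \<Rightarrow> (nat \<Rightarrow> 'w \<Rightarrow> 'a::finite) \<Rightarrow> 'a list set \<Rightarrow> 'a list set \<Rightarrow> real" where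
  "trans_prob M X q q' = (\<Sum>\<sigma> \<in> {\<sigma>. next_state M X q \<sigma> q'}. sym_deriv M X q \<sigma>)"

definition pd :: "'w measure \<Rightarrow> (nat \<Rightarrow> 'w \<Rightarrow> 'a::finite) \<Rightarrow> nat \<Rightarrow> 'a list set \<Rightarrow> real" where
  "pd M X d q = (\<Sum>x \<in> {x. length x = d \<and> cls M X x = q}. Pr M X x)"

definition persistent :: "'w measure \<Rightarrow> (nat \<Rightarrow> 'w \<Rightarrow> 'a::finite) \<Rightarrow> 'a list set \<Rightarrow> bool" where
  "persistent M X q \<longleftrightarrow> liminf (\<lambda>d. ereal (pd M X d q)) > 0"

definition transient :: "'w measure \<Rightarrow> (nat \<Rightarrow> 'w \<Rightarrow> 'a::finite) \<Rightarrow> 'a list set \<Rightarrow> bool" where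
  "transient M X q \<longleftrightarrow> \<not> persistent M X q"

end

theory Submission
  imports Defs
begin

text \<open>A word of length d + 1 is a word y of length d followed by a letter \<sigma>. Right invariance
  of \<sim> makes [y\<sigma>] depend only on q = [y] and \<sigma>, and Pr(y\<sigma>) = \<phi>_q(\<sigma>) Pr(y) when Pr(y) > 0,
  while words of probability zero contribute nothing; grouping the words y by their causal
  state gives the recursion. It yields \<pi>_{q,q'} p_d(q) \<le> p_{d+1}(q'), so a transition of positive
  probability out of a persistent state q forces liminf p_d(q') \<ge> \<pi>_{q,q'} liminf p_d(q) > 0.\<close>

lemma Pr_nonneg: "Pr M X x \<ge> 0"
  unfolding Pr_def by simp

lemma cequiv_refl: "cequiv M X x x"
  using Pr_nonneg[of M X x] unfolding cequiv_def by (auto simp: less_le)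

lemma cequiv_sym: "cequiv M X x y \<Longrightarrow> cequiv M X y x"
  unfolding cequiv_def by auto

lemma cequiv_trans: "cequiv M X x y \<Longrightarrow> cequiv M X y z \<Longrightarrow> cequiv M X x z"
  unfolding cequiv_def by auto

lemma cls_eq_iff: "cls M X x = cls M X y \<longleftrightarrow> cequiv M X x y"
  unfolding cls_def using cequiv_refl cequiv_sym cequiv_trans by blast

lemma cls_in_causal_states_iff: "cls M X y \<in> causal_states M X \<longleftrightarrow> Pr M X y > 0"
proof
  assume "cls M X y \<in> causal_states M X"
  then obtain x where "cls M X y = cls M X x" "Pr M X x > 0"
    unfolding causal_states_def by blast
  then show "Pr M X y > 0"
    unfolding cls_eq_iff cequiv_def by linarith
qed (auto simp: causal_states_def)

lemma sym_deriv_cls: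
  assumes "cls M X y \<in> causal_states M X"
  shows "sym_deriv M X (cls M X y) \<sigma> = Pr M X (y @ [\<sigma>]) / Pr M X y"
proof -
  have "(SOME x. x \<in> cls M X y) \<in> cls M X y"
    by (rule someI[of _ y]) (simp add: cls_def cequiv_refl)
  then have "cequiv M X y (SOME x. x \<in> cls M X y)"
    by (simp add: cls_def)
  moreover have "Pr M X y > 0"
    using assms by (simp add: cls_in_causal_states_iff)
  ultimately have "mu_cyl M X (SOME x. x \<in> cls M X y) = mu_cyl M X y"
    unfolding cequiv_def by auto
  then show ?thesis
    by (simp add: sym_deriv_def mu_cyl_def)
qed

lemma mu_cyl_append:
  assumes "Pr M X x \<noteq> 0"
  shows "mu_cyl M X (x @ z) w = mu_cyl M X x (z @ w) / mu_cyl M X x z"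
  using assms by (simp add: mu_cyl_def)

locale discrete_process = prob_space M for M :: "'w measure" +
  fixes X :: "nat \<Rightarrow> 'w \<Rightarrow> 'a"
  assumes measurable_X [measurable]: "\<And>t. X t \<in> measurable M (count_space UNIV)"
begin

lemma Pr_append_le: "Pr M X (x @ y) \<le> Pr M X x"
  unfolding Pr_def by (rule finite_measure_mono) (auto simp: nth_append)

lemma Pr_append_eq_0: "Pr M X x = 0 \<Longrightarrow> Pr M X (x @ y) = 0"
  using Pr_append_le[of x y] Pr_nonneg[of M X "x @ y"] by linarith

lemma cequiv_append:
  assumes "cequiv M X x y"
  shows "cequiv M X (x @ z) (y @ z)"
proof (cases "Pr M X x = 0")
  case True
  with assms have "Pr M X y = 0"
    by (simp add: cequiv_def)
  with True show ?thesis
    by (simp add: cequiv_def Pr_append_eq_0)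
next
  case False
  with assms have px: "Pr M X x > 0" and py: "Pr M X y > 0"
    and mu: "mu_cyl M X x = mu_cyl M X y"
    by (auto simp: cequiv_def)
  have "Pr M X (x @ z) = Pr M X x * mu_cyl M X x z" "Pr M X (y @ z) = Pr M X y * mu_cyl M X y z"
    using px py by (simp_all add: mu_cyl_def)
  with px py mu have zero_iff: "Pr M X (x @ z) = 0 \<longleftrightarrow> Pr M X (y @ z) = 0"
    by simp
  have "mu_cyl M X (x @ z) w = mu_cyl M X (y @ z) w" for w
    using px py by (simp add: mu_cyl_append mu)
  with zero_iff Pr_nonneg[of M X "x @ z"] Pr_nonneg[of M X "y @ z"] show ?thesis
    unfolding cequiv_def by (auto simp: less_le)
qed

lemma next_state_cls_iff:
  "next_state M X (cls M X y) \<sigma> q' \<longleftrightarrow> cls M X (y @ [\<sigma>]) = q'"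
  unfolding next_state_def cls_def[of M X y]
  using cequiv_refl cequiv_append cls_eq_iff by (metis mem_Collect_eq)

end

lemma trans_prob_nonneg: "trans_prob M X q q' \<ge> 0"
  unfolding trans_prob_def sym_deriv_def mu_cyl_def
  by (rule sum_nonneg) (simp add: Pr_nonneg)

lemma pd_nonneg: "pd M X d q \<ge> 0"
  unfolding pd_def by (rule sum_nonneg) (simp add: Pr_nonneg)

lemma finite_words_length: "finite {y :: 'a::finite list. length y = n}"
  using finite_lists_length_eq[of "UNIV :: 'a set" n] by simp

lemma pd_Suc_eq_sum_snoc:
  fixes X :: "nat \<Rightarrow> 'w \<Rightarrow> 'a::finite"
  shows "pd M X (Suc n) q'
       = (\<Sum>y | length y = n. \<Sum>\<sigma> | cls M X (y @ [\<sigma>]) = q'. Pr M X (y @ [\<sigma>]))"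
proof -
  let ?snoc = "\<lambda>(y, \<sigma>). y @ [\<sigma>] :: 'a list"
  let ?S = "SIGMA y:{y. length y = n}. {\<sigma>. cls M X (y @ [\<sigma>]) = q'}"
  have words: "{x. length x = Suc n \<and> cls M X x = q'} = ?snoc ` ?S"
    by (auto simp: image_iff length_Suc_conv_rev)
  have "inj_on ?snoc ?S"
    by (auto simp: inj_on_def)
  then have "pd M X (Suc n) q' = (\<Sum>(y, \<sigma>) \<in> ?S. Pr M X (y @ [\<sigma>]))"
    unfolding pd_def words by (simp add: sum.reindex comp_def prod.case_distrib)
  also have "\<dots> = (\<Sum>y | length y = n. \<Sum>\<sigma> | cls M X (y @ [\<sigma>]) = q'. Pr M X (y @ [\<sigma>]))"
    by (rule sum.Sigma[symmetric]) (simp_all add: finite_words_length)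
  finally show ?thesis .
qed

definition causal_states_at :: "'w measure \<Rightarrow> (nat \<Rightarrow> 'w \<Rightarrow> 'a) \<Rightarrow> nat \<Rightarrow> 'a list set set" where
  "causal_states_at M X n = cls M X ` {y. length y = n \<and> Pr M X y > 0}"

lemma causal_states_at_subset: "causal_states_at M X n \<subseteq> causal_states M X"
  unfolding causal_states_at_def causal_states_def by blast

lemma finite_causal_states_at:
  fixes X :: "nat \<Rightarrow> 'w \<Rightarrow> 'a::finite"
  shows "finite (causal_states_at M X n)"
  unfolding causal_states_at_def
  by (rule finite_imageI, rule finite_subset[OF _ finite_words_length[of n]]) auto

lemma pd_eq_0_if_notin_causal_states_at:
  assumes "q \<in> causal_states M X" "q \<notin> causal_states_at M X n"
  shows "pd M X n q = 0"
proof -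
  have no_words: "{y. length y = n \<and> cls M X y = q} = {}"
    using assms cls_in_causal_states_iff unfolding causal_states_at_def by blast
  show ?thesis
    unfolding pd_def no_words by simp
qed

locale finite_alphabet_process = discrete_process M X
  for M :: "'w measure" and X :: "nat \<Rightarrow> 'w \<Rightarrow> 'a::finite"
begin

lemma trans_prob_mult_Pr:
  assumes "cls M X y \<in> causal_states M X"
  shows "trans_prob M X (cls M X y) q' * Pr M X y
       = (\<Sum>\<sigma> | cls M X (y @ [\<sigma>]) = q'. Pr M X (y @ [\<sigma>]))"
proof -
  have "Pr M X y > 0"
    using assms by (simp add: cls_in_causal_states_iff)
  then show ?thesis
    unfolding trans_prob_def next_state_cls_iff
    by (simp add: sum_distrib_right sym_deriv_cls[OF assms])
qed

lemma pd_Suc: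
  "pd M X (Suc n) q' = (\<Sum>q \<in> causal_states_at M X n. trans_prob M X q q' * pd M X n q)"
proof -
  define Y where "Y = {y. length y = n \<and> Pr M X y > 0}"
  have fin_Y: "finite Y"
    unfolding Y_def by (rule finite_subset[OF _ finite_words_length[of n]]) auto
  have class_term: "trans_prob M X q q' * pd M X n q
      = (\<Sum>y | y \<in> Y \<and> cls M X y = q. trans_prob M X (cls M X y) q' * Pr M X y)"
    if "q \<in> cls M X ` Y" for q
  proof -
    have "q \<in> causal_states M X"
      using that unfolding Y_def causal_states_def by blast
    then have "{y. length y = n \<and> cls M X y = q} = {y. y \<in> Y \<and> cls M X y = q}"
      by (auto simp: Y_def cls_in_causal_states_iff)
    then show ?thesis
      unfolding pd_def sum_distrib_left by (intro sum.cong) auto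
  qed
  have null_word: "(\<Sum>\<sigma> | cls M X (y @ [\<sigma>]) = q'. Pr M X (y @ [\<sigma>])) = 0"
    if "length y = n" "y \<notin> Y" for y
  proof -
    have "Pr M X y = 0"
      using that Pr_nonneg[of M X y] unfolding Y_def by simp
    then show ?thesis
      by (simp add: Pr_append_eq_0)
  qed
  have "(\<Sum>q \<in> cls M X ` Y. trans_prob M X q q' * pd M X n q)
      = (\<Sum>q \<in> cls M X ` Y. \<Sum>y | y \<in> Y \<and> cls M X y = q. trans_prob M X (cls M X y) q' * Pr M X y)"
    using class_term by (rule sum.cong[OF refl])
  also have "\<dots> = (\<Sum>y \<in> Y. trans_prob M X (cls M X y) q' * Pr M X y)"
    by (rule sum.image_gen[OF fin_Y, symmetric])
  also have "\<dots> = (\<Sum>y \<in> Y. \<Sum>\<sigma> | cls M X (y @ [\<sigma>]) = q'. Pr M X (y @ [\<sigma>]))"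
    by (intro sum.cong refl trans_prob_mult_Pr) (simp add: Y_def cls_in_causal_states_iff)
  also have "\<dots> = (\<Sum>y | length y = n. \<Sum>\<sigma> | cls M X (y @ [\<sigma>]) = q'. Pr M X (y @ [\<sigma>]))"
    using null_word by (intro sum.mono_neutral_left) (auto simp: Y_def finite_words_length)
  finally show ?thesis
    unfolding pd_Suc_eq_sum_snoc causal_states_at_def Y_def by simp
qed

lemma pd_Suc_infsum:
  "pd M X (Suc n) q' = (\<Sum>\<^sub>\<infinity>q \<in> causal_states M X. trans_prob M X q q' * pd M X n q)"
proof -
  have "(\<Sum>\<^sub>\<infinity>q \<in> causal_states M X. trans_prob M X q q' * pd M X n q)
      = (\<Sum>\<^sub>\<infinity>q \<in> causal_states_at M X n. trans_prob M X q q' * pd M X n q)"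
    using causal_states_at_subset[of M X n]
    by (intro infsum_cong_neutral) (auto simp: pd_eq_0_if_notin_causal_states_at)
  then show ?thesis
    by (simp add: pd_Suc finite_causal_states_at)
qed

lemma trans_prob_mult_pd_le:
  assumes "q \<in> causal_states M X"
  shows "trans_prob M X q q' * pd M X n q \<le> pd M X (Suc n) q'"
proof (cases "q \<in> causal_states_at M X n")
  case True
  then show ?thesis
    unfolding pd_Suc
    by (rule member_le_sum) (simp_all add: trans_prob_nonneg pd_nonneg finite_causal_states_at)
next
  case False
  with assms have "pd M X n q = 0"
    by (rule pd_eq_0_if_notin_causal_states_at)
  then show ?thesis
    using pd_nonneg by simp
qed

end

lemma liminf_pos_if_scaled_le_Suc:
  fixes a b :: "nat \<Rightarrow> real"
  assumes "c > 0" "\<And>n. c * a n \<le> b (Suc n)" "liminf (\<lambda>n. ereal (a n)) > 0"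
  shows "liminf (\<lambda>n. ereal (b n)) > 0"
proof -
  have "0 < ereal c * liminf (\<lambda>n. ereal (a n))"
    using assms(1,3) by (simp add: ereal_zero_less_0_iff)
  also have "\<dots> = liminf (\<lambda>n. ereal (c * a n))"
    using Liminf_ereal_mult_left[of sequentially c "\<lambda>n. ereal (a n)"] assms(1) by simp
  also have "\<dots> \<le> liminf (\<lambda>n. ereal (b (n + 1)))"
    by (rule Liminf_mono) (simp add: assms(2))
  also have "\<dots> = liminf (\<lambda>n. ereal (b n))"
    by (rule liminf_shift)
  finally show ?thesis .
qed

theorem mainTheorem2:
  fixes M :: "'w measure" and X :: "nat \<Rightarrow> 'w \<Rightarrow> 'a::finite"
  assumes "stationary_ergodic M X"
  shows "(\<forall>q' \<in> causal_states M X. \<forall>d::nat. d > 0 \<longrightarrow>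
            pd M X d q' = (\<Sum>\<^sub>\<infinity>q \<in> causal_states M X. trans_prob M X q q' * pd M X (d - 1) q))
       \<and> (\<forall>q \<in> causal_states M X. \<forall>q' \<in> causal_states M X.
            persistent M X q \<and> transient M X q' \<longrightarrow> trans_prob M X q q' = 0)"
proof -
  interpret finite_alphabet_process M X
    using assms unfolding stationary_ergodic_def
    by (simp add: finite_alphabet_process_def discrete_process_def discrete_process_axioms_def)
  have recursion: "pd M X d q' = (\<Sum>\<^sub>\<infinity>q \<in> causal_states M X. trans_prob M X q q' * pd M X (d - 1) q)"
    if "d > 0" for d q'
    using that pd_Suc_infsum[of "d - 1" q'] by simp
  have no_escape: "trans_prob M X q q' = 0"
    if "q \<in> causal_states M X" "persistent M X q" "transient M X q'" for q q'
  proof (rule ccontr)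
    assume "trans_prob M X q q' \<noteq> 0"
    then have "trans_prob M X q q' > 0"
      using trans_prob_nonneg[of M X q q'] by simp
    then have "persistent M X q'"
      using trans_prob_mult_pd_le[OF that(1), where q'=q'] that(2)
      unfolding persistent_def by (rule liminf_pos_if_scaled_le_Suc)
    with that(3) show False
      by (simp add: transient_def)
  qed
  show ?thesis
    using recursion no_escape by blast
qed

end
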